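(* Let $G$ be a graph on $n$ vertices. Then $\mathcal{P}_2(\mathcal{E}_G)=\emptyset$ if and only if $G$ is a disjoint union of complete graphs.
   Context: Work over an algebraically closed field $k$. The Fomin–Kirillov algebra $\mathcal{E}_n$ is the graded $k$-algebra generated by degree-$1$ elements $x_{ij}$, $1\leq i<j\leq n$, subject to: $x_{ij}^2=0$; $x_{ij}x_{kl}=x_{kl}x_{ij}$ whenever $\{i,j\}\cap\{k,l\}=\emptyset$; $x_{ij}x_{jk}-x_{jk}x_{ik}-x_{ik}x_{ij}=0$ and $x_{jk}x_{ij}-x_{ik}x_{jk}-x_{ij}x_{ik}=0$ for $i<j<k$. For a graph $G$ on vertex set $\{1,\dots,n\}$, $\mathcal{E}_G$ is the subalgebra of $\mathcal{E}_n$ generated by the $x_{ij}$ with $\{i,j\}$ an edge of $G$. A degree-$2$ truncated point module over a connected graded algebra $A$ generated in degree $1$ is a graded cyclic module generated in degree $0$ with Hilbert series $1+t+t^2$; $\mathcal{P}_2(A)$ is the space of such modules. *)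

theory Defs
  imports "HOL-Computational_Algebra.Polynomial"
begin

text \<open>An element of the degree-2 part of the free algebra
  k<x_ij> is a tensor T, the coefficient of the word x_e x_f being T e f.\<close>

type_synonym gen = "nat \<times> nat"
type_synonym 'k quad = "gen \<Rightarrow> gen \<Rightarrow> 'k"

definition gens :: "nat \<Rightarrow> gen set" where
  "gens n = {(i, j). 1 \<le> i \<and> i < j \<and> j \<le> n}"

definition word2 :: "gen \<Rightarrow> gen \<Rightarrow> 'k::field quad" where
  "word2 e f = (\<lambda>a b. if a = e \<and> b = f then 1 else 0)"

definition FK_rels :: "nat \<Rightarrow> 'k::field quad set" where
  "FK_rels n =
     {word2 (i, j) (i, j) | i j. (i, j) \<in> gens n}
   \<union> {(\<lambda>a b. word2 (i, j) (k, l) a b - word2 (k, l) (i, j) a b) | i j k l.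
        (i, j) \<in> gens n \<and> (k, l) \<in> gens n \<and> {i, j} \<inter> {k, l} = {}}
   \<union> {(\<lambda>a b. word2 (i, j) (j, k) a b - word2 (j, k) (i, k) a b - word2 (i, k) (i, j) a b) | i j k.
        1 \<le> i \<and> i < j \<and> j < k \<and> k \<le> n}
   \<union> {(\<lambda>a b. word2 (j, k) (i, j) a b - word2 (i, k) (j, k) a b - word2 (i, j) (i, k) a b) | i j k.
        1 \<le> i \<and> i < j \<and> j < k \<and> k \<le> n}"

definition lin_span :: "'k::field quad set \<Rightarrow> 'k quad set" where
  "lin_span S = {T. \<exists>F u. finite F \<and> F \<subseteq> S \<and> T = (\<lambda>a b. \<Sum>g\<in>F. u g * g a b)}"

text \<open>Degree-2 relations of E_G: elements of the degree-2 part of the free algebra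
  on the generators x_e, e an edge of G, that vanish in E_n.  Since E_n is
  quadratic, these are exactly the elements of span(FK_rels n) supported on
  words in the edge generators.\<close>
definition EG_rels2 :: "nat \<Rightarrow> gen set \<Rightarrow> 'k::field quad set" where
  "EG_rels2 n E = {T \<in> lin_span (FK_rels n). \<forall>e f. T e f \<noteq> 0 \<longrightarrow> e \<in> E \<and> f \<in> E}"

text \<open>Degree-2 truncated point modules over E_G.  Such a module is
  M = M_0 + M_1 + M_2 with each M_i one-dimensional; identifying each M_i with k,
  generator x_e acts M_0 \<rightarrow> M_1 by the scalar (a e) and M_1 \<rightarrow> M_2 by (b e)
  (and kills M_2).  Cyclic generation in degree 0 means A_1 M_0 = M_1 and
  A_1 M_1 = M_2, and the action of the free algebra must factor through E_G,
  i.e. every degree-2 relation of E_G acts as zero on M_0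
  (x_e x_f m_0 = b e * a f m_2).  Relations in degree \<ge> 3 act trivially because
  M_3 = 0, and E_G has no relations in degrees \<le> 1.\<close>
definition P2 :: "nat \<Rightarrow> gen set \<Rightarrow> ((gen \<Rightarrow> 'k::field) \<times> (gen \<Rightarrow> 'k)) set" where
  "P2 n E = {(a, b).
      (\<forall>e. e \<notin> E \<longrightarrow> a e = 0 \<and> b e = 0) \<and>
      (\<exists>e\<in>E. a e \<noteq> 0) \<and> (\<exists>e\<in>E. b e \<noteq> 0) \<and>
      (\<forall>T \<in> EG_rels2 n E. (\<Sum>e\<in>E. \<Sum>f\<in>E. T e f * (b e * a f)) = 0)}"

text \<open>A graph on {1..n} with edge set E (edges {i,j} stored as (i,j), i<j) is a
  disjoint union of complete graphs: there is a partition of the vertex set such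
  that two distinct vertices are adjacent iff they lie in the same block.\<close>
definition disjoint_union_of_complete :: "nat \<Rightarrow> gen set \<Rightarrow> bool" where
  "disjoint_union_of_complete n E \<longleftrightarrow>
     (\<exists>P. (\<Union>P = {1..n}) \<and> (\<forall>B\<in>P. B \<noteq> {}) \<and>
          (\<forall>B\<in>P. \<forall>C\<in>P. B \<noteq> C \<longrightarrow> B \<inter> C = {}) \<and>
          (\<forall>i j. (i, j) \<in> E \<longleftrightarrow> (i, j) \<in> gens n \<and> (\<exists>B\<in>P. i \<in> B \<and> j \<in> B)))"

end

theory Submission
  imports Defs
begin

text \<open>A graph is a disjoint union of complete graphs iff "equal or adjacent" is transitive.

  If it is not, G contains an induced path x - y - z.  Take for a and b the coordinate functionals
  of the two edges e and f of the path, so that \<open>x\<^sub>f x\<^sub>e\<close> is the only word not sent to 0.  The only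
  defining relation of E_n containing that word also contains a word in the non-edge {x, z}, hence
  no relation of E_G contains it, and (a, b) is a point.

  If it is, take e with a e \<noteq> 0 and f with b f \<noteq> 0.  The relation \<open>x\<^sub>e\<^sup>2 = 0\<close> forces b e = 0.
  If e and f are disjoint, the commutation relation gives b f * a e = b e * a f = 0; otherwise
  e and f span a triangle of G, on which the squares and the two triangle relations force a or b
  to vanish identically.\<close>

definition adj_or_eq :: "gen set \<Rightarrow> nat \<Rightarrow> nat \<Rightarrow> bool" where
  "adj_or_eq E x y \<longleftrightarrow> x = y \<or> (x, y) \<in> E \<or> (y, x) \<in> E"

lemma adj_or_eq_sym: "adj_or_eq E x y \<Longrightarrow> adj_or_eq E y x"
  by (auto simp: adj_or_eq_def)

lemma adj_or_eq_iff_edge: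
  assumes "E \<subseteq> gens n" "x < y"
  shows "adj_or_eq E x y \<longleftrightarrow> (x, y) \<in> E"
  using assms by (auto simp: adj_or_eq_def gens_def)

lemma in_rel_iff_same_class:
  assumes R: "equiv A R"
  shows "(x, y) \<in> R \<longleftrightarrow> (\<exists>B\<in>A//R. x \<in> B \<and> y \<in> B)"
proof
  assume xy: "(x, y) \<in> R"
  then have x: "x \<in> A"
    using equiv_type[OF R] by blast
  have "x \<in> R``{x}" "y \<in> R``{x}" "R``{x} \<in> A//R"
    using equiv_class_self[OF R x] xy quotientI[OF x] by auto
  then show "\<exists>B\<in>A//R. x \<in> B \<and> y \<in> B"
    by blast
next
  assume "\<exists>B\<in>A//R. x \<in> B \<and> y \<in> B"
  then obtain B where "B \<in> A//R" "{x, y} \<subseteq> B"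
    by blast
  then show "(x, y) \<in> R"
    by (rule in_quotient_imp_in_rel[OF R])
qed

lemma transp_adj_or_eq_if_disjoint_union_of_complete:
  assumes "disjoint_union_of_complete n E"
  shows "transp (adj_or_eq E)"
proof -
  obtain P where cover: "\<Union>P = {1..n}"
    and disj: "\<forall>B\<in>P. \<forall>C\<in>P. B \<noteq> C \<longrightarrow> B \<inter> C = {}"
    and edge: "\<forall>i j. (i, j) \<in> E \<longleftrightarrow> (i, j) \<in> gens n \<and> (\<exists>B\<in>P. i \<in> B \<and> j \<in> B)"
    using assms unfolding disjoint_union_of_complete_def by auto
  have blocks: "adj_or_eq E x y \<longleftrightarrow> x = y \<or> (\<exists>B\<in>P. x \<in> B \<and> y \<in> B)" for x y
  proof -
    have "(x, y) \<in> gens n \<or> (y, x) \<in> gens n" if "x \<noteq> y" "B \<in> P" "x \<in> B" "y \<in> B" for B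
      using that cover by (auto simp: gens_def)
    then show ?thesis
      unfolding adj_or_eq_def edge[rule_format] by blast
  qed
  show ?thesis
  proof (rule transpI)
    fix x y z
    assume xy: "adj_or_eq E x y" and yz: "adj_or_eq E y z"
    then consider "x = y" | "y = z" | B C where "B \<in> P" "C \<in> P" "x \<in> B" "y \<in> B" "y \<in> C" "z \<in> C"
      unfolding blocks by blast
    then show "adj_or_eq E x z"
    proof cases
      case 3
      then have "B = C"
        using disj by blast
      with 3 show ?thesis
        unfolding blocks by blast
    qed (use xy yz in simp_all)
  qed
qed

lemma disjoint_union_of_complete_if_transp_adj_or_eq:
  assumes E: "E \<subseteq> gens n" and tr: "transp (adj_or_eq E)"
  shows "disjoint_union_of_complete n E"
proof -
  define R where "R = {(x, y). x \<in> {1..n} \<and> y \<in> {1..n} \<and> adj_or_eq E x y}"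
  have R: "equiv {1..n} R"
  proof (rule equivI)
    show "refl_on {1..n} R" "sym R"
      by (auto simp: R_def refl_on_def sym_def adj_or_eq_def)
    show "trans R"
      using transpD[OF tr] by (auto simp: R_def trans_def)
  qed (auto simp: R_def)
  have edge: "(i, j) \<in> E \<longleftrightarrow> (i, j) \<in> gens n \<and> (i, j) \<in> R" for i j
    using E by (auto simp: R_def gens_def adj_or_eq_def)
  show ?thesis
    unfolding disjoint_union_of_complete_def
  proof (intro exI conjI)
    show "\<Union>({1..n}//R) = {1..n}"
      using R by (rule Union_quotient)
    show "\<forall>B\<in>{1..n}//R. B \<noteq> {}"
      using R in_quotient_imp_non_empty by blast
    show "\<forall>B\<in>{1..n}//R. \<forall>C\<in>{1..n}//R. B \<noteq> C \<longrightarrow> B \<inter> C = {}"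
      using R quotient_disj by blast
    show "\<forall>i j. (i, j) \<in> E \<longleftrightarrow> (i, j) \<in> gens n \<and> (\<exists>B\<in>{1..n}//R. i \<in> B \<and> j \<in> B)"
      using edge in_rel_iff_same_class[OF R] by blast
  qed
qed

lemma disjoint_union_of_complete_iff_transp:
  assumes "E \<subseteq> gens n"
  shows "disjoint_union_of_complete n E \<longleftrightarrow> transp (adj_or_eq E)"
  using assms transp_adj_or_eq_if_disjoint_union_of_complete
    disjoint_union_of_complete_if_transp_adj_or_eq by blast

lemma shared_vertex_triangle:
  fixes i j k l :: nat
  assumes "i < j" "k < l" "(i, j) \<noteq> (k, l)" "{i, j} \<inter> {k, l} \<noteq> {}"
  obtains p q r where "p < q" "q < r" "{p, q, r} = {i, j, k, l}"
    "(i, j) \<in> {(p, q), (q, r), (p, r)}" "(k, l) \<in> {(p, q), (q, r), (p, r)}"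
proof -
  consider "i = k" "j < l" | "i = k" "l < j" | "i = l" | "j = k" | "j = l" "i < k" | "j = l" "k < i"
    using assms by fastforce
  then show ?thesis
  proof cases
    case 1 then show ?thesis using assms by (intro that[of i j l]) auto
  next
    case 2 then show ?thesis using assms by (intro that[of i l j]) auto
  next
    case 3 then show ?thesis using assms by (intro that[of k i j]) auto
  next
    case 4 then show ?thesis using assms by (intro that[of i j l]) auto
  next
    case 5 then show ?thesis using assms by (intro that[of i k j]) auto
  next
    case 6 then show ?thesis using assms by (intro that[of k i j]) auto
  qed
qed

lemma adjacent_edges_span_triangle:
  assumes E: "E \<subseteq> gens n" and tr: "transp (adj_or_eq E)"
    and ij: "(i, j) \<in> E" and kl: "(k, l) \<in> E" and "(i, j) \<noteq> (k, l)" and "{i, j} \<inter> {k, l} \<noteq> {}"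
  obtains p q r where "p < q" "q < r" "(p, q) \<in> E" "(q, r) \<in> E" "(p, r) \<in> E"
    "(i, j) \<in> {(p, q), (q, r), (p, r)}" "(k, l) \<in> {(p, q), (q, r), (p, r)}"
proof -
  obtain s where s: "s \<in> {i, j}" "s \<in> {k, l}"
    using \<open>{i, j} \<inter> {k, l} \<noteq> {}\<close> by blast
  have hub: "adj_or_eq E s v" if "v \<in> {i, j, k, l}" for v
    using that s ij kl by (auto simp: adj_or_eq_def)
  have clique: "adj_or_eq E u v" if "u \<in> {i, j, k, l}" "v \<in> {i, j, k, l}" for u v
    using transpD[OF tr adj_or_eq_sym[OF hub[OF that(1)]] hub[OF that(2)]] .
  have "i < j" "k < l"
    using ij kl E by (auto simp: gens_def)
  then obtain p q r where pqr: "p < q" "q < r" "{p, q, r} = {i, j, k, l}"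
    "(i, j) \<in> {(p, q), (q, r), (p, r)}" "(k, l) \<in> {(p, q), (q, r), (p, r)}"
    using \<open>(i, j) \<noteq> (k, l)\<close> \<open>{i, j} \<inter> {k, l} \<noteq> {}\<close> by (rule shared_vertex_triangle)
  have p: "p \<in> {i, j, k, l}" and q: "q \<in> {i, j, k, l}" and r: "r \<in> {i, j, k, l}"
    using pqr(3) by blast+
  have "(p, q) \<in> E" "(q, r) \<in> E" "(p, r) \<in> E"
    using adj_or_eq_iff_edge[OF E] pqr(1,2) clique[OF p q] clique[OF q r] clique[OF p r] by auto
  with pqr show ?thesis
    by (intro that)
qed

lemma finite_gens: "finite (gens n)"
  by (rule finite_subset[of _ "{1..n} \<times> {1..n}"]) (auto simp: gens_def)

lemma sum_word2:
  fixes a b :: "gen \<Rightarrow> 'k::field"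
  assumes "finite E" "e \<in> E" "f \<in> E"
  shows "(\<Sum>x\<in>E. \<Sum>y\<in>E. word2 e f x y * (b x * a y)) = b e * a f"
proof -
  have "(\<Sum>x\<in>E. \<Sum>y\<in>E. word2 e f x y * (b x * a y)) =
        (\<Sum>x\<in>E. if x = e then (\<Sum>y\<in>E. if y = f then b x * a y else 0) else 0)"
    by (rule sum.cong) (auto simp: word2_def intro!: sum.cong)
  also have "\<dots> = b e * a f"
    using assms by simp
  finally show ?thesis .
qed

lemma FK_rel_in_EG_rels2:
  assumes "g \<in> FK_rels n" "\<forall>x y. g x y \<noteq> 0 \<longrightarrow> x \<in> E \<and> y \<in> E"
  shows "g \<in> EG_rels2 n E"
  unfolding EG_rels2_def lin_span_def
  using assms by (auto intro!: exI[of _ "{g}"] exI[of _ "\<lambda>_. 1"])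

lemma P2_FK_rel:
  assumes "(a, b) \<in> P2 n E" "g \<in> FK_rels n" "\<forall>x y. g x y \<noteq> 0 \<longrightarrow> x \<in> E \<and> y \<in> E"
  shows "(\<Sum>e\<in>E. \<Sum>f\<in>E. g e f * (b e * a f)) = 0"
  using assms FK_rel_in_EG_rels2[OF assms(2,3)] unfolding P2_def by auto

lemma P2_square:
  fixes a b :: "gen \<Rightarrow> 'k::field"
  assumes E: "E \<subseteq> gens n" and P: "(a, b) \<in> P2 n E" and e: "e \<in> E"
  shows "b e * a e = 0"
proof -
  have "(word2 e e :: 'k quad) \<in> FK_rels n"
    using e E unfolding FK_rels_def by (cases e) blast
  from P2_FK_rel[OF P this] have "(\<Sum>x\<in>E. \<Sum>y\<in>E. word2 e e x y * (b x * a y)) = 0"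
    using e by (auto simp: word2_def)
  then show ?thesis
    using sum_word2[OF finite_subset[OF E finite_gens] e e, where a = a and b = b] by simp
qed

lemma P2_commute:
  fixes a b :: "gen \<Rightarrow> 'k::field"
  assumes E: "E \<subseteq> gens n" and P: "(a, b) \<in> P2 n E"
    and h: "(i, j) \<in> E" "(k, l) \<in> E" "{i, j} \<inter> {k, l} = {}"
  shows "b (i, j) * a (k, l) = b (k, l) * a (i, j)"
proof -
  let ?g = "(\<lambda>x y. word2 (i, j) (k, l) x y - word2 (k, l) (i, j) x y) :: 'k quad"
  have "?g \<in> FK_rels n"
    using h E unfolding FK_rels_def by blast
  from P2_FK_rel[OF P this] have "(\<Sum>x\<in>E. \<Sum>y\<in>E. ?g x y * (b x * a y)) = 0"
    using h by (auto simp: word2_def)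
  then show ?thesis
    using sum_word2[OF finite_subset[OF E finite_gens], where a = a and b = b] h
    by (simp add: left_diff_distrib sum_subtractf)
qed

lemma P2_triangle:
  fixes a b :: "gen \<Rightarrow> 'k::field"
  assumes E: "E \<subseteq> gens n" and P: "(a, b) \<in> P2 n E"
    and h: "p < q" "q < r" "(p, q) \<in> E" "(q, r) \<in> E" "(p, r) \<in> E"
  shows "b (p, q) * a (q, r) - b (q, r) * a (p, r) - b (p, r) * a (p, q) = 0"
    and "b (q, r) * a (p, q) - b (p, r) * a (q, r) - b (p, q) * a (p, r) = 0"
proof -
  have range: "1 \<le> p" "r \<le> n"
    using h E by (auto simp: gens_def)
  have ev: "(\<Sum>x\<in>E. \<Sum>y\<in>E. word2 e f x y * (b x * a y)) = b e * a f" if "e \<in> E" "f \<in> E" for e f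
    using sum_word2[OF finite_subset[OF E finite_gens] that, where a = a and b = b] .
  let ?g1 = "(\<lambda>x y. word2 (p, q) (q, r) x y - word2 (q, r) (p, r) x y - word2 (p, r) (p, q) x y) :: 'k quad"
  have "?g1 \<in> FK_rels n"
    using h range unfolding FK_rels_def by blast
  from P2_FK_rel[OF P this] have "(\<Sum>x\<in>E. \<Sum>y\<in>E. ?g1 x y * (b x * a y)) = 0"
    using h by (auto simp: word2_def)
  then show "b (p, q) * a (q, r) - b (q, r) * a (p, r) - b (p, r) * a (p, q) = 0"
    using ev h by (simp add: left_diff_distrib sum_subtractf)
  let ?g2 = "(\<lambda>x y. word2 (q, r) (p, q) x y - word2 (p, r) (q, r) x y - word2 (p, q) (p, r) x y) :: 'k quad"
  have "?g2 \<in> FK_rels n"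
    using h range unfolding FK_rels_def by blast
  from P2_FK_rel[OF P this] have "(\<Sum>x\<in>E. \<Sum>y\<in>E. ?g2 x y * (b x * a y)) = 0"
    using h by (auto simp: word2_def)
  then show "b (q, r) * a (p, q) - b (p, r) * a (q, r) - b (p, q) * a (p, r) = 0"
    using ev h by (simp add: left_diff_distrib sum_subtractf)
qed

lemma no_point_on_triangle:
  fixes a1 a2 a3 b1 b2 b3 :: "'k::field"
  assumes "b1 * a1 = 0" "b2 * a2 = 0" "b3 * a3 = 0"
    "b1 * a2 - b2 * a3 - b3 * a1 = 0" "b2 * a1 - b3 * a2 - b1 * a3 = 0"
  shows "(a1 = 0 \<and> a2 = 0 \<and> a3 = 0) \<or> (b1 = 0 \<and> b2 = 0 \<and> b3 = 0)"
  using assms by (cases "a1 = 0"; cases "a2 = 0") auto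

lemma P2_empty_if_transp:
  fixes a b :: "gen \<Rightarrow> 'k::field"
  assumes E: "E \<subseteq> gens n" and tr: "transp (adj_or_eq E)"
  shows "(a, b) \<notin> P2 n E"
proof
  assume P: "(a, b) \<in> P2 n E"
  then obtain i j k l where ij: "(i, j) \<in> E" "a (i, j) \<noteq> 0" and kl: "(k, l) \<in> E" "b (k, l) \<noteq> 0"
    unfolding P2_def by auto
  have b_ij: "b (i, j) = 0"
    using P2_square[OF E P ij(1)] ij(2) by simp
  show False
  proof (cases "{i, j} \<inter> {k, l} = {}")
    case True
    then show False
      using P2_commute[OF E P kl(1) ij(1)] b_ij ij kl by (auto simp: Int_commute)
  next
    case False
    have "(i, j) \<noteq> (k, l)"
      using b_ij kl by auto
    then obtain p q r where pqr: "p < q" "q < r" and T: "(p, q) \<in> E" "(q, r) \<in> E" "(p, r) \<in> E"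
      and "(i, j) \<in> {(p, q), (q, r), (p, r)}" "(k, l) \<in> {(p, q), (q, r), (p, r)}"
      using adjacent_edges_span_triangle[OF E tr ij(1) kl(1) _ False] by blast
    moreover have "(a (p, q) = 0 \<and> a (q, r) = 0 \<and> a (p, r) = 0) \<or> (b (p, q) = 0 \<and> b (q, r) = 0 \<and> b (p, r) = 0)"
      using P2_square[OF E P] P2_triangle[OF E P pqr T] T
      by (intro no_point_on_triangle) auto
    ultimately show False
      using ij kl by auto
  qed
qed

lemma lin_span_coeff_sum_zero:
  assumes "\<forall>g\<in>S. g w1 w2 + g u1 u2 = (0::'k::field)" "T \<in> lin_span S"
  shows "T w1 w2 + T u1 u2 = 0"
proof -
  obtain F c where F: "finite F" "F \<subseteq> S" "T = (\<lambda>x y. \<Sum>g\<in>F. c g * g x y)"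
    using assms(2) unfolding lin_span_def by blast
  have "T w1 w2 + T u1 u2 = (\<Sum>g\<in>F. c g * (g w1 w2 + g u1 u2))"
    by (simp add: F(3) sum.distrib[symmetric] distrib_left)
  also have "\<dots> = 0"
    using assms(1) F(2) by (intro sum.neutral) auto
  finally show ?thesis .
qed

text \<open>Only the first triangle relation on p < q < r contains these words.\<close>

lemma FK_rels_opposite_coeffs:
  assumes "g \<in> FK_rels n" "p < q" "q < r"
  shows "g (p, q) (q, r) + g (q, r) (p, r) = (0::'k::field)"
    and "g (p, r) (p, q) + g (p, q) (q, r) = (0::'k::field)"
  using assms unfolding FK_rels_def by (auto simp: word2_def)

lemma sum_delta:
  fixes T :: "'k::field quad"
  assumes "finite E" "e \<in> E" "f \<in> E"
  shows "(\<Sum>x\<in>E. \<Sum>y\<in>E. T x y * ((if x = e then 1 else 0) * (if y = f then 1 else 0))) = T e f"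
proof -
  have "(\<Sum>x\<in>E. \<Sum>y\<in>E. T x y * ((if x = e then 1 else 0) * (if y = f then 1 else 0))) =
        (\<Sum>x\<in>E. if x = e then (\<Sum>y\<in>E. if y = f then T x y else 0) else 0)"
    by (rule sum.cong) (auto intro!: sum.cong)
  also have "\<dots> = T e f"
    using assms by simp
  finally show ?thesis .
qed

lemma delta_point_in_P2:
  assumes E: "E \<subseteq> gens n" and e: "e \<in> E" and f: "f \<in> E"
    and coeffs: "\<And>g. g \<in> FK_rels n \<Longrightarrow> g f e + g u1 u2 = (0::'k::field)"
    and u: "u1 \<notin> E \<or> u2 \<notin> E"
  shows "((\<lambda>x. if x = e then 1 else 0), (\<lambda>x. if x = f then 1 else 0)) \<in> (P2 n E :: ((gen \<Rightarrow> 'k) \<times> (gen \<Rightarrow> 'k)) set)"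
proof -
  have "(\<Sum>x\<in>E. \<Sum>y\<in>E. T x y * ((if x = f then 1 else 0) * (if y = e then 1 else 0))) = 0"
    if T: "T \<in> EG_rels2 n E" for T :: "'k quad"
  proof -
    have "T f e + T u1 u2 = 0"
      using T coeffs unfolding EG_rels2_def by (intro lin_span_coeff_sum_zero[of "FK_rels n"]) auto
    moreover have "T u1 u2 = 0"
      using T u unfolding EG_rels2_def by blast
    ultimately show ?thesis
      using sum_delta[OF finite_subset[OF E finite_gens] f e, of T] by simp
  qed
  with e f show ?thesis
    unfolding P2_def by auto
qed

lemma P2_nonempty_if_induced_path_less:
  assumes E: "E \<subseteq> gens n" and xz: "x < z"
    and xy: "adj_or_eq E x y" and yz: "adj_or_eq E y z" and nxz: "\<not> adj_or_eq E x z"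
  shows "\<exists>a b :: gen \<Rightarrow> 'k::field. (a, b) \<in> P2 n E"
proof -
  have edge: "(u, v) \<in> E \<Longrightarrow> u < v" for u v
    using E by (auto simp: gens_def)
  have "x \<noteq> y" "y \<noteq> z" "(x, z) \<notin> E"
    using xy yz nxz by (auto simp: adj_or_eq_def)
  then consider "x < y" "y < z" | "y < x" | "z < y"
    using xz by linarith
  then show ?thesis
  proof cases
    case 1
    with xy yz have "(x, y) \<in> E" "(y, z) \<in> E"
      by (auto simp: adj_or_eq_def dest: edge)
    with 1 \<open>(x, z) \<notin> E\<close> show ?thesis
      using delta_point_in_P2[OF E, of "(y, z)" "(x, y)" "(y, z)" "(x, z)"]
        FK_rels_opposite_coeffs(1)[of _ n x y z] by blast
  next
    case 2
    with xy yz xz have "(y, x) \<in> E" "(y, z) \<in> E"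
      by (auto simp: adj_or_eq_def dest: edge)
    with 2 xz \<open>(x, z) \<notin> E\<close> show ?thesis
      using delta_point_in_P2[OF E, of "(y, x)" "(y, z)" "(y, x)" "(x, z)"]
        FK_rels_opposite_coeffs(2)[of _ n y x z] by blast
  next
    case 3
    with xy yz xz have "(x, y) \<in> E" "(z, y) \<in> E"
      by (auto simp: adj_or_eq_def dest: edge)
    with 3 xz \<open>(x, z) \<notin> E\<close> show ?thesis
      using delta_point_in_P2[OF E, of "(x, y)" "(z, y)" "(x, z)" "(z, y)"]
        FK_rels_opposite_coeffs(1)[of _ n x z y] by (metis add.commute)
  qed
qed

lemma P2_nonempty_if_induced_path:
  assumes E: "E \<subseteq> gens n"
    and xy: "adj_or_eq E x y" and yz: "adj_or_eq E y z" and nxz: "\<not> adj_or_eq E x z"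
  shows "\<exists>a b :: gen \<Rightarrow> 'k::field. (a, b) \<in> P2 n E"
proof -
  have "x \<noteq> z"
    using nxz by (auto simp: adj_or_eq_def)
  then consider "x < z" | "z < x"
    by linarith
  then show ?thesis
  proof cases
    case 1
    then show ?thesis
      using P2_nonempty_if_induced_path_less[OF E _ xy yz nxz] by blast
  next
    case 2
    then show ?thesis
      using P2_nonempty_if_induced_path_less[OF E _ adj_or_eq_sym[OF yz] adj_or_eq_sym[OF xy]] nxz adj_or_eq_sym
      by blast
  qed
qed

lemma P2_empty_iff_transp:
  assumes "E \<subseteq> gens n"
  shows "(P2 n E :: ((gen \<Rightarrow> 'k::field) \<times> (gen \<Rightarrow> 'k)) set) = {} \<longleftrightarrow> transp (adj_or_eq E)"
proof
  assume "(P2 n E :: ((gen \<Rightarrow> 'k) \<times> (gen \<Rightarrow> 'k)) set) = {}"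
  then show "transp (adj_or_eq E)"
    using P2_nonempty_if_induced_path[OF assms] by (metis empty_iff transpI)
next
  assume "transp (adj_or_eq E)"
  then show "(P2 n E :: ((gen \<Rightarrow> 'k) \<times> (gen \<Rightarrow> 'k)) set) = {}"
    using P2_empty_if_transp[OF assms] by fast
qed

theorem corollary3p1:
  fixes n :: nat and E :: "(nat \<times> nat) set"
  assumes "E \<subseteq> gens n"
  shows "(P2 n E :: ((nat \<times> nat \<Rightarrow> 'k::alg_closed_field) \<times> (nat \<times> nat \<Rightarrow> 'k)) set) = {}
         \<longleftrightarrow> disjoint_union_of_complete n E"
  using P2_empty_iff_transp disjoint_union_of_complete_iff_transp assms by blast

end
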